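(* Let $(\mathcal{C},d,\eta)$ be a monoidal anti-involutive category, with $d$ having monoidal structure $\chi_{c_1,c_2}\colon dc_1\otimes dc_2\to d(c_1\otimes c_2)$ and $u\colon1\to d(1)$. Then defining $(c_1,h_1)\otimes(c_2,h_2):=(c_1\otimes c_2,\ \chi_{c_1,c_2}\circ(h_1\otimes h_2))$, with unit $(1,u)$ and with associators and unitors those of $\mathcal{C}$, makes $\mathrm{Herm}\,\mathcal{C}$ into a monoidal dagger category.
   Context: An anti-involutive category $(\mathcal{C},d,\eta)$: functor $d\colon\mathcal{C}\to\mathcal{C}^{\mathrm{op}}$ and natural isomorphism $\eta\colon\mathrm{id}_{\mathcal{C}}\Rightarrow d^2$ with $d(\eta_c)\circ\eta_{dc}=\mathrm{id}_{dc}$. It is monoidal if $\mathcal{C}$ is monoidal, $d$ is a (strong) monoidal functor $\mathcal{C}\to\mathcal{C}^{\mathrm{op}}$ (where $\mathcal{C}^{\mathrm{op}}$ reverses composition but not the tensor product) and $\eta$ is a monoidal natural transformation. A Hermitian pairing on $c$ is an isomorphism $h\colon c\to dc$ with $d(h)\circ\eta_c=h$. $\mathrm{Herm}\,\mathcal{C}$ has objects $(c,h)$, morphisms $(c_1,h_1)\to(c_2,h_2)$ all morphisms $c_1\to c_2$ in $\mathcal{C}$, and dagger $f^\dagger=h_1^{-1}\circ d(f)\circ h_2$. A monoidal dagger category is a dagger category ($\dagger$ identity on objects, $f^{\dagger\dagger}=f$) with a monoidal structure such that $(f\otimes g)^\dagger=f^\dagger\otimes g^\dagger$ and associator and unitors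 are unitary ($u^\dagger=u^{-1}$). *)

theory Defs
  imports Main
begin

text \<open>A category is given by a set of objects, hom-sets, a composition
  (cmp g f = g o f) and identities.  Axioms are required only for objects in Ob.\<close>

record ('o,'m) category =
  Ob  :: "'o set"
  Hom :: "'o \<Rightarrow> 'o \<Rightarrow> 'm set"
  cmp :: "'m \<Rightarrow> 'm \<Rightarrow> 'm"
  idm :: "'o \<Rightarrow> 'm"

record ('o,'m) moncat = "('o,'m) category" +
  tens  :: "'o \<Rightarrow> 'o \<Rightarrow> 'o"
  tensm :: "'m \<Rightarrow> 'm \<Rightarrow> 'm"
  unitO :: "'o"
  assoc :: "'o \<Rightarrow> 'o \<Rightarrow> 'o \<Rightarrow> 'm"   \<comment> \<open>(a x b) x c \<rightarrow> a x (b x c)\<close>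
  lunit :: "'o \<Rightarrow> 'm"                 \<comment> \<open>1 x a \<rightarrow> a\<close>
  runit :: "'o \<Rightarrow> 'm"                 \<comment> \<open>a x 1 \<rightarrow> a\<close>

definition is_category :: "('o,'m,'x) category_scheme \<Rightarrow> bool" where
  "is_category C \<longleftrightarrow>
     (\<forall>a\<in>Ob C. idm C a \<in> Hom C a a) \<and>
     (\<forall>a\<in>Ob C. \<forall>b\<in>Ob C. \<forall>c\<in>Ob C. \<forall>f\<in>Hom C a b. \<forall>g\<in>Hom C b c.
         cmp C g f \<in> Hom C a c) \<and>
     (\<forall>a\<in>Ob C. \<forall>b\<in>Ob C. \<forall>f\<in>Hom C a b.
         cmp C (idm C b) f = f \<and> cmp C f (idm C a) = f) \<and>
     (\<forall>a\<in>Ob C. \<forall>b\<in>Ob C. \<forall>c\<in>Ob C. \<forall>e\<in>Ob C.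
       \<forall>f\<in>Hom C a b. \<forall>g\<in>Hom C b c. \<forall>h\<in>Hom C c e.
         cmp C h (cmp C g f) = cmp C (cmp C h g) f)"

definition is_iso :: "('o,'m,'x) category_scheme \<Rightarrow> 'o \<Rightarrow> 'o \<Rightarrow> 'm \<Rightarrow> bool" where
  "is_iso C a b f \<longleftrightarrow> f \<in> Hom C a b \<and>
     (\<exists>g\<in>Hom C b a. cmp C g f = idm C a \<and> cmp C f g = idm C b)"

definition inv_mor :: "('o,'m,'x) category_scheme \<Rightarrow> 'o \<Rightarrow> 'o \<Rightarrow> 'm \<Rightarrow> 'm" where
  "inv_mor C a b f = (SOME g. g \<in> Hom C b a \<and> cmp C g f = idm C a \<and> cmp C f g = idm C b)"

definition is_monoidal_category :: "('o,'m,'x) moncat_scheme \<Rightarrow> bool" where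
  "is_monoidal_category M \<longleftrightarrow>
     is_category M \<and>
     unitO M \<in> Ob M \<and>
     (\<forall>a\<in>Ob M. \<forall>b\<in>Ob M. tens M a b \<in> Ob M) \<and>
     \<comment> \<open>tensor is a bifunctor\<close>
     (\<forall>a\<in>Ob M. \<forall>b\<in>Ob M. \<forall>a'\<in>Ob M. \<forall>b'\<in>Ob M. \<forall>f\<in>Hom M a b. \<forall>g\<in>Hom M a' b'.
         tensm M f g \<in> Hom M (tens M a a') (tens M b b')) \<and>
     (\<forall>a\<in>Ob M. \<forall>b\<in>Ob M. tensm M (idm M a) (idm M b) = idm M (tens M a b)) \<and>
     (\<forall>a\<in>Ob M. \<forall>b\<in>Ob M. \<forall>c\<in>Ob M. \<forall>a'\<in>Ob M. \<forall>b'\<in>Ob M. \<forall>c'\<in>Ob M.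
       \<forall>f\<in>Hom M a b. \<forall>g\<in>Hom M b c. \<forall>f'\<in>Hom M a' b'. \<forall>g'\<in>Hom M b' c'.
         tensm M (cmp M g f) (cmp M g' f') = cmp M (tensm M g g') (tensm M f f')) \<and>
     \<comment> \<open>associator and unitors: natural isomorphisms\<close>
     (\<forall>a\<in>Ob M. \<forall>b\<in>Ob M. \<forall>c\<in>Ob M.
         is_iso M (tens M (tens M a b) c) (tens M a (tens M b c)) (assoc M a b c)) \<and>
     (\<forall>a\<in>Ob M. \<forall>b\<in>Ob M. \<forall>c\<in>Ob M. \<forall>a'\<in>Ob M. \<forall>b'\<in>Ob M. \<forall>c'\<in>Ob M.
       \<forall>f\<in>Hom M a a'. \<forall>g\<in>Hom M b b'. \<forall>h\<in>Hom M c c'.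
         cmp M (assoc M a' b' c') (tensm M (tensm M f g) h)
           = cmp M (tensm M f (tensm M g h)) (assoc M a b c)) \<and>
     (\<forall>a\<in>Ob M. is_iso M (tens M (unitO M) a) a (lunit M a)) \<and>
     (\<forall>a\<in>Ob M. \<forall>b\<in>Ob M. \<forall>f\<in>Hom M a b.
         cmp M (lunit M b) (tensm M (idm M (unitO M)) f) = cmp M f (lunit M a)) \<and>
     (\<forall>a\<in>Ob M. is_iso M (tens M a (unitO M)) a (runit M a)) \<and>
     (\<forall>a\<in>Ob M. \<forall>b\<in>Ob M. \<forall>f\<in>Hom M a b.
         cmp M (runit M b) (tensm M f (idm M (unitO M))) = cmp M f (runit M a)) \<and>
     \<comment> \<open>pentagon\<close>
     (\<forall>a\<in>Ob M. \<forall>b\<in>Ob M. \<forall>c\<in>Ob M. \<forall>e\<in>Ob M.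
         cmp M (assoc M a b (tens M c e)) (assoc M (tens M a b) c e)
           = cmp M (tensm M (idm M a) (assoc M b c e))
               (cmp M (assoc M a (tens M b c) e) (tensm M (assoc M a b c) (idm M e)))) \<and>
     \<comment> \<open>triangle\<close>
     (\<forall>a\<in>Ob M. \<forall>b\<in>Ob M.
         cmp M (tensm M (idm M a) (lunit M b)) (assoc M a (unitO M) b)
           = tensm M (runit M a) (idm M b))"

text \<open>d is given by dO (objects) and dM (morphisms) as a contravariant functor;
  eta : id => d^2; chi a b : d a x d b -> d (a x b) and u : 1 -> d 1 the strong monoidal
  structure of d : C -> C^op (written as morphisms of C).\<close>

definition monoidal_anti_involutive ::
  "('o,'m,'x) moncat_scheme \<Rightarrow> ('o \<Rightarrow> 'o) \<Rightarrow> ('m \<Rightarrow> 'm) \<Rightarrow> ('o \<Rightarrow> 'm)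
     \<Rightarrow> ('o \<Rightarrow> 'o \<Rightarrow> 'm) \<Rightarrow> 'm \<Rightarrow> bool" where
  "monoidal_anti_involutive M dO dM eta chi u \<longleftrightarrow>
     is_monoidal_category M \<and>
     \<comment> \<open>d : C -> C^op is a functor\<close>
     (\<forall>a\<in>Ob M. dO a \<in> Ob M) \<and>
     (\<forall>a\<in>Ob M. \<forall>b\<in>Ob M. \<forall>f\<in>Hom M a b. dM f \<in> Hom M (dO b) (dO a)) \<and>
     (\<forall>a\<in>Ob M. dM (idm M a) = idm M (dO a)) \<and>
     (\<forall>a\<in>Ob M. \<forall>b\<in>Ob M. \<forall>c\<in>Ob M. \<forall>f\<in>Hom M a b. \<forall>g\<in>Hom M b c.
         dM (cmp M g f) = cmp M (dM f) (dM g)) \<and>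
     \<comment> \<open>eta : id => d^2 natural isomorphism\<close>
     (\<forall>a\<in>Ob M. is_iso M a (dO (dO a)) (eta a)) \<and>
     (\<forall>a\<in>Ob M. \<forall>b\<in>Ob M. \<forall>f\<in>Hom M a b.
         cmp M (dM (dM f)) (eta a) = cmp M (eta b) f) \<and>
     \<comment> \<open>d(eta_c) o eta_(dc) = id_(dc)\<close>
     (\<forall>a\<in>Ob M. cmp M (dM (eta a)) (eta (dO a)) = idm M (dO a)) \<and>
     \<comment> \<open>strong monoidal structure of d\<close>
     (\<forall>a\<in>Ob M. \<forall>b\<in>Ob M.
         is_iso M (tens M (dO a) (dO b)) (dO (tens M a b)) (chi a b)) \<and>
     is_iso M (unitO M) (dO (unitO M)) u \<and>
     (\<forall>a\<in>Ob M. \<forall>b\<in>Ob M. \<forall>a'\<in>Ob M. \<forall>b'\<in>Ob M. \<forall>f\<in>Hom M a a'. \<forall>g\<in>Hom M b b'.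
         cmp M (dM (tensm M f g)) (chi a' b') = cmp M (chi a b) (tensm M (dM f) (dM g))) \<and>
     (\<forall>a\<in>Ob M. \<forall>b\<in>Ob M. \<forall>c\<in>Ob M.
         cmp M (dM (assoc M a b c))
           (cmp M (chi a (tens M b c))
             (cmp M (tensm M (idm M (dO a)) (chi b c)) (assoc M (dO a) (dO b) (dO c))))
         = cmp M (chi (tens M a b) c) (tensm M (chi a b) (idm M (dO c)))) \<and>
     (\<forall>a\<in>Ob M. cmp M (dM (lunit M a)) (lunit M (dO a))
         = cmp M (chi (unitO M) a) (tensm M u (idm M (dO a)))) \<and>
     (\<forall>a\<in>Ob M. cmp M (dM (runit M a)) (runit M (dO a))
         = cmp M (chi a (unitO M)) (tensm M (idm M (dO a)) u)) \<and>
     \<comment> \<open>eta is a monoidal natural transformation id => d^2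
        (the monoidal structure of d^2 being d(chi)^-1 o chi_(d-,d-) and d(u)^-1 o u)\<close>
     (\<forall>a\<in>Ob M. \<forall>b\<in>Ob M.
         cmp M (chi (dO a) (dO b)) (tensm M (eta a) (eta b))
           = cmp M (dM (chi a b)) (eta (tens M a b))) \<and>
     cmp M (dM u) (eta (unitO M)) = u"

definition herm_pairing ::
  "('o,'m,'x) moncat_scheme \<Rightarrow> ('o \<Rightarrow> 'o) \<Rightarrow> ('m \<Rightarrow> 'm) \<Rightarrow> ('o \<Rightarrow> 'm) \<Rightarrow> 'o \<Rightarrow> 'm \<Rightarrow> bool" where
  "herm_pairing M dO dM eta c h \<longleftrightarrow>
     is_iso M c (dO c) h \<and> cmp M (dM h) (eta c) = h"

definition Herm_moncat ::
  "('o,'m,'x) moncat_scheme \<Rightarrow> ('o \<Rightarrow> 'o) \<Rightarrow> ('m \<Rightarrow> 'm) \<Rightarrow> ('o \<Rightarrow> 'm)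
     \<Rightarrow> ('o \<Rightarrow> 'o \<Rightarrow> 'm) \<Rightarrow> 'm \<Rightarrow> ('o \<times> 'm, 'm) moncat" where
  "Herm_moncat M dO dM eta chi u =
    \<lparr> Ob = {(c, h). c \<in> Ob M \<and> herm_pairing M dO dM eta c h},
      Hom = (\<lambda>x y. Hom M (fst x) (fst y)),
      cmp = cmp M,
      idm = (\<lambda>x. idm M (fst x)),
      tens = (\<lambda>x y. (tens M (fst x) (fst y),
                     cmp M (chi (fst x) (fst y)) (tensm M (snd x) (snd y)))),
      tensm = tensm M,
      unitO = (unitO M, u),
      assoc = (\<lambda>x y z. assoc M (fst x) (fst y) (fst z)),
      lunit = (\<lambda>x. lunit M (fst x)),
      runit = (\<lambda>x. runit M (fst x)) \<rparr>"

definition Herm_dag ::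
  "('o,'m,'x) moncat_scheme \<Rightarrow> ('o \<Rightarrow> 'o) \<Rightarrow> ('m \<Rightarrow> 'm)
     \<Rightarrow> 'o \<times> 'm \<Rightarrow> 'o \<times> 'm \<Rightarrow> 'm \<Rightarrow> 'm" where
  "Herm_dag M dO dM x y f =
     cmp M (inv_mor M (fst x) (dO (fst x)) (snd x)) (cmp M (dM f) (snd y))"

definition monoidal_dagger_category ::
  "('o,'m,'x) moncat_scheme \<Rightarrow> ('o \<Rightarrow> 'o \<Rightarrow> 'm \<Rightarrow> 'm) \<Rightarrow> bool" where
  "monoidal_dagger_category M dag \<longleftrightarrow>
     is_monoidal_category M \<and>
     \<comment> \<open>dagger: identity-on-objects contravariant involutive functor\<close>
     (\<forall>a\<in>Ob M. \<forall>b\<in>Ob M. \<forall>f\<in>Hom M a b. dag a b f \<in> Hom M b a) \<and>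
     (\<forall>a\<in>Ob M. dag a a (idm M a) = idm M a) \<and>
     (\<forall>a\<in>Ob M. \<forall>b\<in>Ob M. \<forall>c\<in>Ob M. \<forall>f\<in>Hom M a b. \<forall>g\<in>Hom M b c.
         dag a c (cmp M g f) = cmp M (dag a b f) (dag b c g)) \<and>
     (\<forall>a\<in>Ob M. \<forall>b\<in>Ob M. \<forall>f\<in>Hom M a b. dag b a (dag a b f) = f) \<and>
     \<comment> \<open>compatibility with tensor\<close>
     (\<forall>a\<in>Ob M. \<forall>b\<in>Ob M. \<forall>a'\<in>Ob M. \<forall>b'\<in>Ob M. \<forall>f\<in>Hom M a b. \<forall>g\<in>Hom M a' b'.
         dag (tens M a a') (tens M b b') (tensm M f g) = tensm M (dag a b f) (dag a' b' g)) \<and>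
     \<comment> \<open>associator and unitors are unitary\<close>
     (\<forall>a\<in>Ob M. \<forall>b\<in>Ob M. \<forall>c\<in>Ob M.
         let s = tens M (tens M a b) c; t = tens M a (tens M b c); f = assoc M a b c in
         cmp M (dag s t f) f = idm M s \<and> cmp M f (dag s t f) = idm M t) \<and>
     (\<forall>a\<in>Ob M.
         let s = tens M (unitO M) a; f = lunit M a in
         cmp M (dag s a f) f = idm M s \<and> cmp M f (dag s a f) = idm M a) \<and>
     (\<forall>a\<in>Ob M.
         let s = tens M a (unitO M); f = runit M a in
         cmp M (dag s a f) f = idm M s \<and> cmp M f (dag s a f) = idm M a)"

end

theory Submission
  imports Defs
begin

text \<open>The dagger \<open>f\<^sup>\<dagger> = h\<^sub>1\<^sup>-\<^sup>1 \<circ> d(f) \<circ> h\<^sub>2\<close> is contravariant because \<open>d\<close> is, and it is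
  involutive because the Hermitian condition \<open>d(h) \<circ> \<eta> = h\<close> gives \<open>d(h\<^sup>-\<^sup>1) \<circ> h = \<eta>\<close>, after which
  naturality of \<open>\<eta>\<close> cancels the double dual. Tensor products of Hermitian pairings are Hermitian
  because \<open>\<eta>\<close> is monoidal, and naturality of \<open>\<chi>\<close> makes the dagger commute with \<open>\<otimes>\<close>.
  Finally, an isomorphism \<open>f\<close> with \<open>d(f) \<circ> h\<^sub>2 \<circ> f = h\<^sub>1\<close> satisfies \<open>f\<^sup>\<dagger> \<circ> f = id\<close>, hence is
  unitary, and the coherence axioms of \<open>\<chi>\<close> and \<open>u\<close> with the associator and unitors say precisely
  that these preserve the tensor pairings.\<close>

abbreviation cat_comp :: "('o,'m,'x) category_scheme \<Rightarrow> 'm \<Rightarrow> 'm \<Rightarrow> 'm" (infixr "\<cdot>\<index>" 55)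
  where "g \<cdot>\<^bsub>C\<^esub> f \<equiv> cmp C g f"

abbreviation moncat_tens :: "('o,'m,'x) moncat_scheme \<Rightarrow> 'o \<Rightarrow> 'o \<Rightarrow> 'o" (infix "\<otimes>\<^sub>o\<index>" 60)
  where "a \<otimes>\<^sub>o\<^bsub>M\<^esub> b \<equiv> tens M a b"

abbreviation moncat_tensm :: "('o,'m,'x) moncat_scheme \<Rightarrow> 'm \<Rightarrow> 'm \<Rightarrow> 'm" (infix "\<otimes>\<index>" 60)
  where "f \<otimes>\<^bsub>M\<^esub> g \<equiv> tensm M f g"

locale cat =
  fixes C :: "('o,'m,'x) category_scheme" (structure)
  assumes is_category: "is_category C"
begin

lemma id_hom [intro]: "a \<in> Ob C \<Longrightarrow> idm C a \<in> Hom C a a"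
  using is_category unfolding is_category_def by blast

lemma comp_hom [intro]:
  "\<lbrakk>f \<in> Hom C a b; g \<in> Hom C b c; a \<in> Ob C; b \<in> Ob C; c \<in> Ob C\<rbrakk> \<Longrightarrow> g \<cdot> f \<in> Hom C a c"
  using is_category unfolding is_category_def by blast

lemma comp_id_left [simp]: "\<lbrakk>f \<in> Hom C a b; a \<in> Ob C; b \<in> Ob C\<rbrakk> \<Longrightarrow> idm C b \<cdot> f = f"
  using is_category unfolding is_category_def by blast

lemma comp_id_right [simp]: "\<lbrakk>f \<in> Hom C a b; a \<in> Ob C; b \<in> Ob C\<rbrakk> \<Longrightarrow> f \<cdot> idm C a = f"
  using is_category unfolding is_category_def by blast

lemma comp_assoc:
  "\<lbrakk>f \<in> Hom C a b; g \<in> Hom C b c; h \<in> Hom C c e; a \<in> Ob C; b \<in> Ob C; c \<in> Ob C; e \<in> Ob C\<rbrakk>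
   \<Longrightarrow> h \<cdot> g \<cdot> f = (h \<cdot> g) \<cdot> f"
  using is_category unfolding is_category_def by blast

lemma iso_hom [intro]: "is_iso C a b f \<Longrightarrow> f \<in> Hom C a b"
  unfolding is_iso_def by blast

lemma
  assumes "is_iso C a b f"
  shows inv_mor_hom [intro]: "inv_mor C a b f \<in> Hom C b a"
    and inv_mor_comp_self [simp]: "inv_mor C a b f \<cdot> f = idm C a"
    and comp_inv_mor_self [simp]: "f \<cdot> inv_mor C a b f = idm C b"
proof -
  have "\<exists>g. g \<in> Hom C b a \<and> g \<cdot> f = idm C a \<and> f \<cdot> g = idm C b"
    using assms unfolding is_iso_def by blast
  from someI_ex[OF this] show "inv_mor C a b f \<in> Hom C b a" "inv_mor C a b f \<cdot> f = idm C a"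
    "f \<cdot> inv_mor C a b f = idm C b"
    unfolding inv_mor_def by blast+
qed

lemma inv_mor_cancel_left:
  assumes "is_iso C a b f" "g \<in> Hom C c a" "a \<in> Ob C" "b \<in> Ob C" "c \<in> Ob C"
  shows "inv_mor C a b f \<cdot> f \<cdot> g = g"
proof -
  have "inv_mor C a b f \<cdot> f \<cdot> g = (inv_mor C a b f \<cdot> f) \<cdot> g"
    by (rule comp_assoc) (use assms in blast)+
  then show ?thesis
    using assms by simp
qed

lemma inv_mor_cancel_right:
  assumes "is_iso C a b f" "g \<in> Hom C c b" "a \<in> Ob C" "b \<in> Ob C" "c \<in> Ob C"
  shows "f \<cdot> inv_mor C a b f \<cdot> g = g"
proof -
  have "f \<cdot> inv_mor C a b f \<cdot> g = (f \<cdot> inv_mor C a b f) \<cdot> g"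
    by (rule comp_assoc) (use assms in blast)+
  then show ?thesis
    using assms by simp
qed

lemma inv_mor_unique:
  assumes f: "is_iso C a b f" and g: "g \<in> Hom C b a" "g \<cdot> f = idm C a" and ob: "a \<in> Ob C" "b \<in> Ob C"
  shows "inv_mor C a b f = g"
proof -
  have "g = g \<cdot> f \<cdot> inv_mor C a b f"
    using f g ob by simp
  also have "\<dots> = (g \<cdot> f) \<cdot> inv_mor C a b f"
    using f g ob by (blast intro: comp_assoc)
  also have "\<dots> = inv_mor C a b f"
    using f g ob inv_mor_hom[OF f] by simp
  finally show ?thesis
    by (rule sym)
qed

lemma
  assumes f: "is_iso C a b f" and g: "is_iso C b c g" and ob: "a \<in> Ob C" "b \<in> Ob C" "c \<in> Ob C"
  shows iso_comp: "is_iso C a c (g \<cdot> f)"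
    and inv_mor_comp: "inv_mor C a c (g \<cdot> f) = inv_mor C a b f \<cdot> inv_mor C b c g"
proof -
  let ?k = "inv_mor C a b f \<cdot> inv_mor C b c g"
  have "?k \<cdot> g \<cdot> f = inv_mor C a b f \<cdot> inv_mor C b c g \<cdot> g \<cdot> f"
    by (rule comp_assoc[symmetric]) (use f g ob in blast)+
  then have left: "?k \<cdot> g \<cdot> f = idm C a"
    using f g ob iso_hom[OF f] by (simp add: inv_mor_cancel_left)
  have "(g \<cdot> f) \<cdot> ?k = g \<cdot> f \<cdot> inv_mor C a b f \<cdot> inv_mor C b c g"
    by (rule comp_assoc[symmetric]) (use f g ob in blast)+
  then have "(g \<cdot> f) \<cdot> ?k = idm C c"
    using f g ob iso_hom[OF g] inv_mor_hom[OF g] by (simp add: inv_mor_cancel_right)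
  with left show iso: "is_iso C a c (g \<cdot> f)"
    unfolding is_iso_def using f g ob by blast
  show "inv_mor C a c (g \<cdot> f) = ?k"
    using inv_mor_unique[OF iso _ left] f g ob by blast
qed

end

locale monoidal_cat =
  fixes M :: "('o,'m,'x) moncat_scheme" (structure)
  assumes is_monoidal_category: "is_monoidal_category M"

sublocale monoidal_cat \<subseteq> cat M
  using is_monoidal_category unfolding is_monoidal_category_def by unfold_locales blast

context monoidal_cat
begin

lemma unit_ob [intro, simp]: "unitO M \<in> Ob M"
  using is_monoidal_category unfolding is_monoidal_category_def by simp

lemma tens_ob [intro, simp]: "\<lbrakk>a \<in> Ob M; b \<in> Ob M\<rbrakk> \<Longrightarrow> a \<otimes>\<^sub>o b \<in> Ob M"
  using is_monoidal_category unfolding is_monoidal_category_def by simp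

lemma tensm_hom [intro]:
  "\<lbrakk>f \<in> Hom M a b; g \<in> Hom M a' b'; a \<in> Ob M; b \<in> Ob M; a' \<in> Ob M; b' \<in> Ob M\<rbrakk>
   \<Longrightarrow> f \<otimes> g \<in> Hom M (a \<otimes>\<^sub>o a') (b \<otimes>\<^sub>o b')"
  using is_monoidal_category unfolding is_monoidal_category_def by simp

lemma tensm_id [simp]: "\<lbrakk>a \<in> Ob M; b \<in> Ob M\<rbrakk> \<Longrightarrow> idm M a \<otimes> idm M b = idm M (a \<otimes>\<^sub>o b)"
  using is_monoidal_category unfolding is_monoidal_category_def by simp

lemma tensm_comp:
  "\<lbrakk>f \<in> Hom M a b; g \<in> Hom M b c; f' \<in> Hom M a' b'; g' \<in> Hom M b' c';
    a \<in> Ob M; b \<in> Ob M; c \<in> Ob M; a' \<in> Ob M; b' \<in> Ob M; c' \<in> Ob M\<rbrakk>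
   \<Longrightarrow> (g \<cdot> f) \<otimes> (g' \<cdot> f') = (g \<otimes> g') \<cdot> (f \<otimes> f')"
  using is_monoidal_category unfolding is_monoidal_category_def by simp

lemma assoc_iso:
  "\<lbrakk>a \<in> Ob M; b \<in> Ob M; c \<in> Ob M\<rbrakk> \<Longrightarrow> is_iso M ((a \<otimes>\<^sub>o b) \<otimes>\<^sub>o c) (a \<otimes>\<^sub>o (b \<otimes>\<^sub>o c)) (assoc M a b c)"
  using is_monoidal_category unfolding is_monoidal_category_def by simp

lemma assoc_nat:
  "\<lbrakk>f \<in> Hom M a a'; g \<in> Hom M b b'; h \<in> Hom M c c';
    a \<in> Ob M; b \<in> Ob M; c \<in> Ob M; a' \<in> Ob M; b' \<in> Ob M; c' \<in> Ob M\<rbrakk>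
   \<Longrightarrow> assoc M a' b' c' \<cdot> ((f \<otimes> g) \<otimes> h) = (f \<otimes> (g \<otimes> h)) \<cdot> assoc M a b c"
  using is_monoidal_category unfolding is_monoidal_category_def by simp

lemma lunit_iso: "a \<in> Ob M \<Longrightarrow> is_iso M (unitO M \<otimes>\<^sub>o a) a (lunit M a)"
  using is_monoidal_category unfolding is_monoidal_category_def by simp

lemma lunit_nat:
  "\<lbrakk>f \<in> Hom M a b; a \<in> Ob M; b \<in> Ob M\<rbrakk> \<Longrightarrow> lunit M b \<cdot> (idm M (unitO M) \<otimes> f) = f \<cdot> lunit M a"
  using is_monoidal_category unfolding is_monoidal_category_def by simp

lemma runit_iso: "a \<in> Ob M \<Longrightarrow> is_iso M (a \<otimes>\<^sub>o unitO M) a (runit M a)"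
  using is_monoidal_category unfolding is_monoidal_category_def by simp

lemma runit_nat:
  "\<lbrakk>f \<in> Hom M a b; a \<in> Ob M; b \<in> Ob M\<rbrakk> \<Longrightarrow> runit M b \<cdot> (f \<otimes> idm M (unitO M)) = f \<cdot> runit M a"
  using is_monoidal_category unfolding is_monoidal_category_def by simp

lemma pentagon:
  "\<lbrakk>a \<in> Ob M; b \<in> Ob M; c \<in> Ob M; e \<in> Ob M\<rbrakk> \<Longrightarrow>
   assoc M a b (c \<otimes>\<^sub>o e) \<cdot> assoc M (a \<otimes>\<^sub>o b) c e
   = (idm M a \<otimes> assoc M b c e) \<cdot> assoc M a (b \<otimes>\<^sub>o c) e \<cdot> (assoc M a b c \<otimes> idm M e)"
  using is_monoidal_category unfolding is_monoidal_category_def by simp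

lemma triangle:
  "\<lbrakk>a \<in> Ob M; b \<in> Ob M\<rbrakk> \<Longrightarrow>
   (idm M a \<otimes> lunit M b) \<cdot> assoc M a (unitO M) b = runit M a \<otimes> idm M b"
  using is_monoidal_category unfolding is_monoidal_category_def by simp

lemma assoc_hom [intro]:
  "\<lbrakk>a \<in> Ob M; b \<in> Ob M; c \<in> Ob M\<rbrakk> \<Longrightarrow> assoc M a b c \<in> Hom M ((a \<otimes>\<^sub>o b) \<otimes>\<^sub>o c) (a \<otimes>\<^sub>o (b \<otimes>\<^sub>o c))"
  using assoc_iso by blast

lemma lunit_hom [intro]: "a \<in> Ob M \<Longrightarrow> lunit M a \<in> Hom M (unitO M \<otimes>\<^sub>o a) a"
  using lunit_iso by blast

lemma runit_hom [intro]: "a \<in> Ob M \<Longrightarrow> runit M a \<in> Hom M (a \<otimes>\<^sub>o unitO M) a"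
  using runit_iso by blast

lemma
  assumes f: "is_iso M a b f" and g: "is_iso M a' b' g"
    and ob: "a \<in> Ob M" "b \<in> Ob M" "a' \<in> Ob M" "b' \<in> Ob M"
  shows iso_tensm: "is_iso M (a \<otimes>\<^sub>o a') (b \<otimes>\<^sub>o b') (f \<otimes> g)"
    and inv_mor_tensm:
      "inv_mor M (a \<otimes>\<^sub>o a') (b \<otimes>\<^sub>o b') (f \<otimes> g) = inv_mor M a b f \<otimes> inv_mor M a' b' g"
proof -
  let ?k = "inv_mor M a b f \<otimes> inv_mor M a' b' g"
  have "?k \<cdot> (f \<otimes> g) = (inv_mor M a b f \<cdot> f) \<otimes> (inv_mor M a' b' g \<cdot> g)"
    by (rule tensm_comp[symmetric]) (use f g ob in blast)+
  then have left: "?k \<cdot> (f \<otimes> g) = idm M (a \<otimes>\<^sub>o a')"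
    using f g ob by simp
  have "(f \<otimes> g) \<cdot> ?k = (f \<cdot> inv_mor M a b f) \<otimes> (g \<cdot> inv_mor M a' b' g)"
    by (rule tensm_comp[symmetric]) (use f g ob in blast)+
  then have "(f \<otimes> g) \<cdot> ?k = idm M (b \<otimes>\<^sub>o b')"
    using f g ob by simp
  with left show iso: "is_iso M (a \<otimes>\<^sub>o a') (b \<otimes>\<^sub>o b') (f \<otimes> g)"
    unfolding is_iso_def using f g ob by blast
  show "inv_mor M (a \<otimes>\<^sub>o a') (b \<otimes>\<^sub>o b') (f \<otimes> g) = ?k"
    using inv_mor_unique[OF iso _ left] f g ob by blast
qed

end

locale anti_involutive =
  fixes M :: "('o,'m,'x) moncat_scheme" (structure)
    and dO :: "'o \<Rightarrow> 'o" and dM :: "'m \<Rightarrow> 'm" and eta :: "'o \<Rightarrow> 'm"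
    and chi :: "'o \<Rightarrow> 'o \<Rightarrow> 'm" and u :: 'm
  assumes monoidal_anti_involutive: "monoidal_anti_involutive M dO dM eta chi u"

sublocale anti_involutive \<subseteq> monoidal_cat M
  using monoidal_anti_involutive unfolding monoidal_anti_involutive_def by unfold_locales simp

context anti_involutive
begin

lemma d_ob [intro, simp]: "a \<in> Ob M \<Longrightarrow> dO a \<in> Ob M"
  using monoidal_anti_involutive unfolding monoidal_anti_involutive_def by simp

lemma d_hom [intro]: "\<lbrakk>f \<in> Hom M a b; a \<in> Ob M; b \<in> Ob M\<rbrakk> \<Longrightarrow> dM f \<in> Hom M (dO b) (dO a)"
  using monoidal_anti_involutive unfolding monoidal_anti_involutive_def by simp

lemma d_id [simp]: "a \<in> Ob M \<Longrightarrow> dM (idm M a) = idm M (dO a)"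
  using monoidal_anti_involutive unfolding monoidal_anti_involutive_def by simp

lemma d_comp:
  "\<lbrakk>f \<in> Hom M a b; g \<in> Hom M b c; a \<in> Ob M; b \<in> Ob M; c \<in> Ob M\<rbrakk> \<Longrightarrow> dM (g \<cdot> f) = dM f \<cdot> dM g"
  using monoidal_anti_involutive unfolding monoidal_anti_involutive_def by simp

lemma eta_hom [intro]: "a \<in> Ob M \<Longrightarrow> eta a \<in> Hom M a (dO (dO a))"
  using monoidal_anti_involutive unfolding monoidal_anti_involutive_def is_iso_def by simp

lemma eta_nat: "\<lbrakk>f \<in> Hom M a b; a \<in> Ob M; b \<in> Ob M\<rbrakk> \<Longrightarrow> dM (dM f) \<cdot> eta a = eta b \<cdot> f"
  using monoidal_anti_involutive unfolding monoidal_anti_involutive_def by simp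

lemma chi_iso: "\<lbrakk>a \<in> Ob M; b \<in> Ob M\<rbrakk> \<Longrightarrow> is_iso M (dO a \<otimes>\<^sub>o dO b) (dO (a \<otimes>\<^sub>o b)) (chi a b)"
  using monoidal_anti_involutive unfolding monoidal_anti_involutive_def by simp

lemma chi_hom [intro]: "\<lbrakk>a \<in> Ob M; b \<in> Ob M\<rbrakk> \<Longrightarrow> chi a b \<in> Hom M (dO a \<otimes>\<^sub>o dO b) (dO (a \<otimes>\<^sub>o b))"
  using chi_iso by blast

lemma u_iso: "is_iso M (unitO M) (dO (unitO M)) u"
  using monoidal_anti_involutive unfolding monoidal_anti_involutive_def by simp

lemma u_hom [intro]: "u \<in> Hom M (unitO M) (dO (unitO M))"
  using u_iso by blast

lemma chi_nat:
  "\<lbrakk>f \<in> Hom M a a'; g \<in> Hom M b b'; a \<in> Ob M; b \<in> Ob M; a' \<in> Ob M; b' \<in> Ob M\<rbrakk>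
   \<Longrightarrow> dM (f \<otimes> g) \<cdot> chi a' b' = chi a b \<cdot> (dM f \<otimes> dM g)"
  using monoidal_anti_involutive unfolding monoidal_anti_involutive_def by simp

lemma d_assoc:
  "\<lbrakk>a \<in> Ob M; b \<in> Ob M; c \<in> Ob M\<rbrakk> \<Longrightarrow>
   dM (assoc M a b c) \<cdot> chi a (b \<otimes>\<^sub>o c) \<cdot> (idm M (dO a) \<otimes> chi b c) \<cdot> assoc M (dO a) (dO b) (dO c)
   = chi (a \<otimes>\<^sub>o b) c \<cdot> (chi a b \<otimes> idm M (dO c))"
  using monoidal_anti_involutive unfolding monoidal_anti_involutive_def by simp

lemma d_lunit:
  "a \<in> Ob M \<Longrightarrow> dM (lunit M a) \<cdot> lunit M (dO a) = chi (unitO M) a \<cdot> (u \<otimes> idm M (dO a))"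
  using monoidal_anti_involutive unfolding monoidal_anti_involutive_def by simp

lemma d_runit:
  "a \<in> Ob M \<Longrightarrow> dM (runit M a) \<cdot> runit M (dO a) = chi a (unitO M) \<cdot> (idm M (dO a) \<otimes> u)"
  using monoidal_anti_involutive unfolding monoidal_anti_involutive_def by simp

lemma d_chi_eta:
  "\<lbrakk>a \<in> Ob M; b \<in> Ob M\<rbrakk> \<Longrightarrow> dM (chi a b) \<cdot> eta (a \<otimes>\<^sub>o b) = chi (dO a) (dO b) \<cdot> (eta a \<otimes> eta b)"
  using monoidal_anti_involutive unfolding monoidal_anti_involutive_def by simp

lemma d_u_eta: "dM u \<cdot> eta (unitO M) = u"
  using monoidal_anti_involutive unfolding monoidal_anti_involutive_def by simp

abbreviation herm :: "'o \<Rightarrow> 'm \<Rightarrow> bool" where "herm a h \<equiv> herm_pairing M dO dM eta a h"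

lemma herm_pairing_iso: "herm a h \<Longrightarrow> is_iso M a (dO a) h"
  unfolding herm_pairing_def by blast

lemma herm_pairing_hom: "herm a h \<Longrightarrow> h \<in> Hom M a (dO a)"
  unfolding herm_pairing_def by blast

lemma herm_pairing_inv_hom: "herm a h \<Longrightarrow> inv_mor M a (dO a) h \<in> Hom M (dO a) a"
  unfolding herm_pairing_def by blast

lemma herm_pairing_d_eta: "herm a h \<Longrightarrow> dM h \<cdot> eta a = h"
  unfolding herm_pairing_def by blast

text \<open>Unlike \<open>blast\<close>, which gets lost guessing the intermediate objects of long composites,
  \<open>(rule hom_rules \<dots>)+\<close> infers them deterministically from left to right.\<close>

lemmas hom_rules = id_hom comp_hom tens_ob unit_ob tensm_hom assoc_hom lunit_hom runit_hom
  d_ob d_hom eta_hom chi_hom u_hom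

lemma herm_pairing_unit: "herm (unitO M) u"
  unfolding herm_pairing_def using u_iso d_u_eta by blast

lemma herm_pairing_tens:
  assumes ob: "a \<in> Ob M" "b \<in> Ob M" and ha: "herm a ha" and hb: "herm b hb"
  shows "herm (a \<otimes>\<^sub>o b) (chi a b \<cdot> (ha \<otimes> hb))"
proof -
  note homs = ob herm_pairing_hom[OF ha] herm_pairing_hom[OF hb]
  have iso: "is_iso M (a \<otimes>\<^sub>o b) (dO (a \<otimes>\<^sub>o b)) (chi a b \<cdot> (ha \<otimes> hb))"
    by (rule iso_comp[OF iso_tensm[OF herm_pairing_iso[OF ha] herm_pairing_iso[OF hb]] chi_iso])
      (use ob in auto)
  have "dM (chi a b \<cdot> (ha \<otimes> hb)) = dM (ha \<otimes> hb) \<cdot> dM (chi a b)"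
    by (rule d_comp) (rule hom_rules homs)+
  then have "dM (chi a b \<cdot> (ha \<otimes> hb)) \<cdot> eta (a \<otimes>\<^sub>o b)
      = (dM (ha \<otimes> hb) \<cdot> dM (chi a b)) \<cdot> eta (a \<otimes>\<^sub>o b)"
    by simp
  also have "\<dots> = dM (ha \<otimes> hb) \<cdot> dM (chi a b) \<cdot> eta (a \<otimes>\<^sub>o b)"
    by (rule comp_assoc[symmetric]) (rule hom_rules homs)+
  also have "dM (chi a b) \<cdot> eta (a \<otimes>\<^sub>o b) = chi (dO a) (dO b) \<cdot> (eta a \<otimes> eta b)"
    using ob by (rule d_chi_eta)
  also have "dM (ha \<otimes> hb) \<cdot> chi (dO a) (dO b) \<cdot> (eta a \<otimes> eta b)
      = (dM (ha \<otimes> hb) \<cdot> chi (dO a) (dO b)) \<cdot> (eta a \<otimes> eta b)"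
    by (rule comp_assoc) (rule hom_rules homs)+
  also have "dM (ha \<otimes> hb) \<cdot> chi (dO a) (dO b) = chi a b \<cdot> (dM ha \<otimes> dM hb)"
    by (rule chi_nat) (rule hom_rules homs)+
  also have "(chi a b \<cdot> (dM ha \<otimes> dM hb)) \<cdot> (eta a \<otimes> eta b)
      = chi a b \<cdot> (dM ha \<otimes> dM hb) \<cdot> (eta a \<otimes> eta b)"
    by (rule comp_assoc[symmetric]) (rule hom_rules homs)+
  also have "(dM ha \<otimes> dM hb) \<cdot> (eta a \<otimes> eta b) = (dM ha \<cdot> eta a) \<otimes> (dM hb \<cdot> eta b)"
    by (rule tensm_comp[symmetric]) (rule hom_rules homs)+
  finally have "dM (chi a b \<cdot> (ha \<otimes> hb)) \<cdot> eta (a \<otimes>\<^sub>o b) = chi a b \<cdot> (ha \<otimes> hb)"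
    using ha hb by (simp add: herm_pairing_d_eta)
  with iso show ?thesis
    unfolding herm_pairing_def by blast
qed

lemma herm_pairing_d_inv:
  assumes a: "a \<in> Ob M" and ha: "herm a ha"
  shows "dM (inv_mor M a (dO a) ha) \<cdot> ha = eta a"
proof -
  let ?ia = "inv_mor M a (dO a) ha"
  note homs = a herm_pairing_hom[OF ha] herm_pairing_inv_hom[OF ha]
  have "dM ?ia \<cdot> ha = dM ?ia \<cdot> dM ha \<cdot> eta a"
    using ha by (simp add: herm_pairing_d_eta)
  also have "\<dots> = (dM ?ia \<cdot> dM ha) \<cdot> eta a"
    by (rule comp_assoc) (rule hom_rules homs)+
  also have "dM ?ia \<cdot> dM ha = dM (ha \<cdot> ?ia)"
    by (rule d_comp[symmetric]) (rule hom_rules homs)+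
  finally show ?thesis
    using homs herm_pairing_iso[OF ha] eta_hom[OF a] by simp
qed

abbreviation dag :: "'o \<times> 'm \<Rightarrow> 'o \<times> 'm \<Rightarrow> 'm \<Rightarrow> 'm" where "dag \<equiv> Herm_dag M dO dM"

lemma Herm_dag_pair: "dag (a, ha) (b, hb) f = inv_mor M a (dO a) ha \<cdot> dM f \<cdot> hb"
  unfolding Herm_dag_def by simp

lemma Herm_dag_hom:
  "\<lbrakk>a \<in> Ob M; b \<in> Ob M; herm a ha; herm b hb; f \<in> Hom M a b\<rbrakk> \<Longrightarrow> dag (a, ha) (b, hb) f \<in> Hom M b a"
  unfolding Herm_dag_pair by (rule hom_rules herm_pairing_hom herm_pairing_inv_hom | assumption)+

lemma Herm_dag_id:
  assumes "a \<in> Ob M" and ha: "herm a ha"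
  shows "dag (a, ha) (a, ha) (idm M a) = idm M a"
  using assms herm_pairing_hom[OF ha] herm_pairing_iso[OF ha] by (simp add: Herm_dag_pair)

lemma Herm_dag_comp:
  assumes ob: "a \<in> Ob M" "b \<in> Ob M" "c \<in> Ob M"
    and ha: "herm a ha" and hb: "herm b hb" and hc: "herm c hc"
    and f: "f \<in> Hom M a b" and g: "g \<in> Hom M b c"
  shows "dag (a, ha) (c, hc) (g \<cdot> f) = dag (a, ha) (b, hb) f \<cdot> dag (b, hb) (c, hc) g"
proof -
  let ?ia = "inv_mor M a (dO a) ha" and ?ib = "inv_mor M b (dO b) hb"
  note homs = ob f g herm_pairing_hom[OF ha] herm_pairing_hom[OF hb] herm_pairing_hom[OF hc]
    herm_pairing_inv_hom[OF ha] herm_pairing_inv_hom[OF hb]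
  have "(?ia \<cdot> dM f \<cdot> hb) \<cdot> ?ib \<cdot> dM g \<cdot> hc = ?ia \<cdot> (dM f \<cdot> hb) \<cdot> ?ib \<cdot> dM g \<cdot> hc"
    by (rule comp_assoc[symmetric]) (rule hom_rules homs)+
  also have "(dM f \<cdot> hb) \<cdot> ?ib \<cdot> dM g \<cdot> hc = dM f \<cdot> hb \<cdot> ?ib \<cdot> dM g \<cdot> hc"
    by (rule comp_assoc[symmetric]) (rule hom_rules homs)+
  also have "hb \<cdot> ?ib \<cdot> dM g \<cdot> hc = dM g \<cdot> hc"
    by (rule inv_mor_cancel_right[OF herm_pairing_iso[OF hb]]) (rule hom_rules homs)+
  also have "dM f \<cdot> dM g \<cdot> hc = (dM f \<cdot> dM g) \<cdot> hc"
    by (rule comp_assoc) (rule hom_rules homs)+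
  also have "dM f \<cdot> dM g = dM (g \<cdot> f)"
    by (rule d_comp[symmetric]) (rule hom_rules homs)+
  finally show ?thesis
    by (simp add: Herm_dag_pair)
qed

lemma Herm_dag_involutive:
  assumes ob: "a \<in> Ob M" "b \<in> Ob M" and ha: "herm a ha" and hb: "herm b hb" and f: "f \<in> Hom M a b"
  shows "dag (b, hb) (a, ha) (dag (a, ha) (b, hb) f) = f"
proof -
  let ?ia = "inv_mor M a (dO a) ha" and ?ib = "inv_mor M b (dO b) hb"
  note homs = ob f herm_pairing_hom[OF ha] herm_pairing_hom[OF hb]
    herm_pairing_inv_hom[OF ha] herm_pairing_inv_hom[OF hb]
  have "dM (?ia \<cdot> dM f \<cdot> hb) = dM (dM f \<cdot> hb) \<cdot> dM ?ia"
    by (rule d_comp) (rule hom_rules homs)+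
  also have "dM (dM f \<cdot> hb) = dM hb \<cdot> dM (dM f)"
    by (rule d_comp) (rule hom_rules homs)+
  finally have "dag (b, hb) (a, ha) (dag (a, ha) (b, hb) f)
      = ?ib \<cdot> ((dM hb \<cdot> dM (dM f)) \<cdot> dM ?ia) \<cdot> ha"
    by (simp add: Herm_dag_pair)
  also have "((dM hb \<cdot> dM (dM f)) \<cdot> dM ?ia) \<cdot> ha = (dM hb \<cdot> dM (dM f)) \<cdot> dM ?ia \<cdot> ha"
    by (rule comp_assoc[symmetric]) (rule hom_rules homs)+
  also have "dM ?ia \<cdot> ha = eta a"
    using ob(1) ha by (rule herm_pairing_d_inv)
  also have "(dM hb \<cdot> dM (dM f)) \<cdot> eta a = dM hb \<cdot> dM (dM f) \<cdot> eta a"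
    by (rule comp_assoc[symmetric]) (rule hom_rules homs)+
  also have "dM (dM f) \<cdot> eta a = eta b \<cdot> f"
    using f ob by (rule eta_nat)
  also have "dM hb \<cdot> eta b \<cdot> f = (dM hb \<cdot> eta b) \<cdot> f"
    by (rule comp_assoc) (rule hom_rules homs)+
  also have "dM hb \<cdot> eta b = hb"
    using hb by (rule herm_pairing_d_eta)
  also have "?ib \<cdot> hb \<cdot> f = f"
    by (rule inv_mor_cancel_left[OF herm_pairing_iso[OF hb]]) (rule hom_rules homs)+
  finally show ?thesis .
qed

lemma Herm_dag_tensm:
  assumes ob: "a \<in> Ob M" "b \<in> Ob M" "a' \<in> Ob M" "b' \<in> Ob M"
    and ha: "herm a ha" and hb: "herm b hb" and ha': "herm a' ha'" and hb': "herm b' hb'"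
    and f: "f \<in> Hom M a b" and g: "g \<in> Hom M a' b'"
  shows "dag (a \<otimes>\<^sub>o a', chi a a' \<cdot> (ha \<otimes> ha')) (b \<otimes>\<^sub>o b', chi b b' \<cdot> (hb \<otimes> hb')) (f \<otimes> g)
       = dag (a, ha) (b, hb) f \<otimes> dag (a', ha') (b', hb') g"
proof -
  let ?ia = "inv_mor M a (dO a) ha" and ?ia' = "inv_mor M a' (dO a') ha'"
    and ?ichi = "inv_mor M (dO a \<otimes>\<^sub>o dO a') (dO (a \<otimes>\<^sub>o a')) (chi a a')"
  note homs = ob f g herm_pairing_hom[OF ha] herm_pairing_hom[OF hb] herm_pairing_hom[OF ha']
    herm_pairing_hom[OF hb'] herm_pairing_inv_hom[OF ha] herm_pairing_inv_hom[OF ha']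
    inv_mor_hom[OF chi_iso[of a a']]
  note isos = herm_pairing_iso[OF ha] herm_pairing_iso[OF ha']
  have "inv_mor M (a \<otimes>\<^sub>o a') (dO (a \<otimes>\<^sub>o a')) (chi a a' \<cdot> (ha \<otimes> ha'))
      = inv_mor M (a \<otimes>\<^sub>o a') (dO a \<otimes>\<^sub>o dO a') (ha \<otimes> ha') \<cdot> ?ichi"
    by (rule inv_mor_comp[OF iso_tensm chi_iso]) (use ob isos in auto)
  also have "inv_mor M (a \<otimes>\<^sub>o a') (dO a \<otimes>\<^sub>o dO a') (ha \<otimes> ha') = ?ia \<otimes> ?ia'"
    by (rule inv_mor_tensm) (use ob isos in auto)
  finally have "dag (a \<otimes>\<^sub>o a', chi a a' \<cdot> (ha \<otimes> ha')) (b \<otimes>\<^sub>o b', chi b b' \<cdot> (hb \<otimes> hb')) (f \<otimes> g)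
      = ((?ia \<otimes> ?ia') \<cdot> ?ichi) \<cdot> dM (f \<otimes> g) \<cdot> chi b b' \<cdot> (hb \<otimes> hb')"
    by (simp add: Herm_dag_pair)
  also have "dM (f \<otimes> g) \<cdot> chi b b' \<cdot> (hb \<otimes> hb') = (dM (f \<otimes> g) \<cdot> chi b b') \<cdot> (hb \<otimes> hb')"
    by (rule comp_assoc) (rule hom_rules homs)+
  also have "dM (f \<otimes> g) \<cdot> chi b b' = chi a a' \<cdot> (dM f \<otimes> dM g)"
    by (rule chi_nat) (rule hom_rules homs)+
  also have "(chi a a' \<cdot> (dM f \<otimes> dM g)) \<cdot> (hb \<otimes> hb') = chi a a' \<cdot> (dM f \<otimes> dM g) \<cdot> (hb \<otimes> hb')"
    by (rule comp_assoc[symmetric]) (rule hom_rules homs)+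
  also have "(dM f \<otimes> dM g) \<cdot> (hb \<otimes> hb') = (dM f \<cdot> hb) \<otimes> (dM g \<cdot> hb')"
    by (rule tensm_comp[symmetric]) (rule hom_rules homs)+
  also have "((?ia \<otimes> ?ia') \<cdot> ?ichi) \<cdot> chi a a' \<cdot> ((dM f \<cdot> hb) \<otimes> (dM g \<cdot> hb'))
      = (?ia \<otimes> ?ia') \<cdot> ?ichi \<cdot> chi a a' \<cdot> ((dM f \<cdot> hb) \<otimes> (dM g \<cdot> hb'))"
    by (rule comp_assoc[symmetric]) (rule hom_rules homs)+
  also have "?ichi \<cdot> chi a a' \<cdot> ((dM f \<cdot> hb) \<otimes> (dM g \<cdot> hb')) = (dM f \<cdot> hb) \<otimes> (dM g \<cdot> hb')"
    by (rule inv_mor_cancel_left[OF chi_iso]) (rule hom_rules homs)+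
  also have "(?ia \<otimes> ?ia') \<cdot> ((dM f \<cdot> hb) \<otimes> (dM g \<cdot> hb')) = (?ia \<cdot> dM f \<cdot> hb) \<otimes> (?ia' \<cdot> dM g \<cdot> hb')"
    by (rule tensm_comp[symmetric]) (rule hom_rules homs)+
  finally show ?thesis
    by (simp add: Herm_dag_pair)
qed

lemma Herm_dag_unitary:
  assumes ob: "a \<in> Ob M" "b \<in> Ob M" and ha: "herm a ha" and hb: "herm b hb"
    and f: "is_iso M a b f" and preserves: "dM f \<cdot> hb \<cdot> f = ha"
  shows "dag (a, ha) (b, hb) f \<cdot> f = idm M a" and "f \<cdot> dag (a, ha) (b, hb) f = idm M b"
proof -
  let ?ia = "inv_mor M a (dO a) ha"
  note homs = ob iso_hom[OF f] herm_pairing_hom[OF hb] herm_pairing_inv_hom[OF ha]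
  have "(?ia \<cdot> dM f \<cdot> hb) \<cdot> f = ?ia \<cdot> (dM f \<cdot> hb) \<cdot> f"
    by (rule comp_assoc[symmetric]) (rule hom_rules homs)+
  also have "(dM f \<cdot> hb) \<cdot> f = dM f \<cdot> hb \<cdot> f"
    by (rule comp_assoc[symmetric]) (rule hom_rules homs)+
  finally show left: "dag (a, ha) (b, hb) f \<cdot> f = idm M a"
    using preserves herm_pairing_iso[OF ha] by (simp add: Herm_dag_pair)
  have "dag (a, ha) (b, hb) f = inv_mor M a b f"
    using inv_mor_unique[OF f _ left] Herm_dag_hom[OF ob ha hb iso_hom[OF f]] ob by simp
  then show "f \<cdot> dag (a, ha) (b, hb) f = idm M b"
    using f by simp
qed

lemma assoc_preserves_pairing:
  assumes ob: "a \<in> Ob M" "b \<in> Ob M" "c \<in> Ob M"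
    and ha: "herm a ha" and hb: "herm b hb" and hc: "herm c hc"
  shows "dM (assoc M a b c) \<cdot> (chi a (b \<otimes>\<^sub>o c) \<cdot> (ha \<otimes> (chi b c \<cdot> (hb \<otimes> hc)))) \<cdot> assoc M a b c
       = chi (a \<otimes>\<^sub>o b) c \<cdot> ((chi a b \<cdot> (ha \<otimes> hb)) \<otimes> hc)"
proof -
  let ?\<alpha> = "assoc M a b c" and ?\<alpha>d = "assoc M (dO a) (dO b) (dO c)" and ?\<chi> = "chi a (b \<otimes>\<^sub>o c)"
    and ?P = "idm M (dO a) \<otimes> chi b c" and ?Q = "ha \<otimes> (hb \<otimes> hc)" and ?R = "(ha \<otimes> hb) \<otimes> hc"
  note homs = ob herm_pairing_hom[OF ha] herm_pairing_hom[OF hb] herm_pairing_hom[OF hc]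
  have "?P \<cdot> ?Q = (idm M (dO a) \<cdot> ha) \<otimes> (chi b c \<cdot> (hb \<otimes> hc))"
    by (rule tensm_comp[symmetric]) (rule hom_rules homs)+
  then have "dM ?\<alpha> \<cdot> (?\<chi> \<cdot> (ha \<otimes> (chi b c \<cdot> (hb \<otimes> hc)))) \<cdot> ?\<alpha> = dM ?\<alpha> \<cdot> (?\<chi> \<cdot> ?P \<cdot> ?Q) \<cdot> ?\<alpha>"
    using homs by simp
  also have "(?\<chi> \<cdot> ?P \<cdot> ?Q) \<cdot> ?\<alpha> = ?\<chi> \<cdot> (?P \<cdot> ?Q) \<cdot> ?\<alpha>"
    by (rule comp_assoc[symmetric]) (rule hom_rules homs)+
  also have "(?P \<cdot> ?Q) \<cdot> ?\<alpha> = ?P \<cdot> ?Q \<cdot> ?\<alpha>"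
    by (rule comp_assoc[symmetric]) (rule hom_rules homs)+
  also have "?Q \<cdot> ?\<alpha> = ?\<alpha>d \<cdot> ?R"
    by (rule assoc_nat[symmetric]) (rule hom_rules homs)+
  also have "?P \<cdot> ?\<alpha>d \<cdot> ?R = (?P \<cdot> ?\<alpha>d) \<cdot> ?R"
    by (rule comp_assoc) (rule hom_rules homs)+
  also have "?\<chi> \<cdot> (?P \<cdot> ?\<alpha>d) \<cdot> ?R = (?\<chi> \<cdot> ?P \<cdot> ?\<alpha>d) \<cdot> ?R"
    by (rule comp_assoc) (rule hom_rules homs)+
  also have "dM ?\<alpha> \<cdot> (?\<chi> \<cdot> ?P \<cdot> ?\<alpha>d) \<cdot> ?R = (dM ?\<alpha> \<cdot> ?\<chi> \<cdot> ?P \<cdot> ?\<alpha>d) \<cdot> ?R"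
    by (rule comp_assoc) (rule hom_rules homs)+
  also have "dM ?\<alpha> \<cdot> ?\<chi> \<cdot> ?P \<cdot> ?\<alpha>d = chi (a \<otimes>\<^sub>o b) c \<cdot> (chi a b \<otimes> idm M (dO c))"
    using ob by (rule d_assoc)
  also have "(chi (a \<otimes>\<^sub>o b) c \<cdot> (chi a b \<otimes> idm M (dO c))) \<cdot> ?R
      = chi (a \<otimes>\<^sub>o b) c \<cdot> (chi a b \<otimes> idm M (dO c)) \<cdot> ?R"
    by (rule comp_assoc[symmetric]) (rule hom_rules homs)+
  also have "(chi a b \<otimes> idm M (dO c)) \<cdot> ?R = (chi a b \<cdot> (ha \<otimes> hb)) \<otimes> (idm M (dO c) \<cdot> hc)"
    by (rule tensm_comp[symmetric]) (rule hom_rules homs)+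
  finally show ?thesis
    using homs by simp
qed

lemma lunit_preserves_pairing:
  assumes a: "a \<in> Ob M" and ha: "herm a ha"
  shows "dM (lunit M a) \<cdot> ha \<cdot> lunit M a = chi (unitO M) a \<cdot> (u \<otimes> ha)"
proof -
  let ?l = "lunit M a" and ?ld = "lunit M (dO a)"
  note homs = a herm_pairing_hom[OF ha]
  have "dM ?l \<cdot> ha \<cdot> ?l = dM ?l \<cdot> ?ld \<cdot> (idm M (unitO M) \<otimes> ha)"
    using lunit_nat[OF herm_pairing_hom[OF ha]] a by simp
  also have "\<dots> = (dM ?l \<cdot> ?ld) \<cdot> (idm M (unitO M) \<otimes> ha)"
    by (rule comp_assoc) (rule hom_rules homs)+
  also have "dM ?l \<cdot> ?ld = chi (unitO M) a \<cdot> (u \<otimes> idm M (dO a))"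
    using a by (rule d_lunit)
  also have "(chi (unitO M) a \<cdot> (u \<otimes> idm M (dO a))) \<cdot> (idm M (unitO M) \<otimes> ha)
      = chi (unitO M) a \<cdot> (u \<otimes> idm M (dO a)) \<cdot> (idm M (unitO M) \<otimes> ha)"
    by (rule comp_assoc[symmetric]) (rule hom_rules homs)+
  also have "(u \<otimes> idm M (dO a)) \<cdot> (idm M (unitO M) \<otimes> ha)
      = (u \<cdot> idm M (unitO M)) \<otimes> (idm M (dO a) \<cdot> ha)"
    by (rule tensm_comp[symmetric]) (rule hom_rules homs)+
  finally show ?thesis
    using homs u_hom by simp
qed

lemma runit_preserves_pairing:
  assumes a: "a \<in> Ob M" and ha: "herm a ha"
  shows "dM (runit M a) \<cdot> ha \<cdot> runit M a = chi a (unitO M) \<cdot> (ha \<otimes> u)"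
proof -
  let ?r = "runit M a" and ?rd = "runit M (dO a)"
  note homs = a herm_pairing_hom[OF ha]
  have "dM ?r \<cdot> ha \<cdot> ?r = dM ?r \<cdot> ?rd \<cdot> (ha \<otimes> idm M (unitO M))"
    using runit_nat[OF herm_pairing_hom[OF ha]] a by simp
  also have "\<dots> = (dM ?r \<cdot> ?rd) \<cdot> (ha \<otimes> idm M (unitO M))"
    by (rule comp_assoc) (rule hom_rules homs)+
  also have "dM ?r \<cdot> ?rd = chi a (unitO M) \<cdot> (idm M (dO a) \<otimes> u)"
    using a by (rule d_runit)
  also have "(chi a (unitO M) \<cdot> (idm M (dO a) \<otimes> u)) \<cdot> (ha \<otimes> idm M (unitO M))
      = chi a (unitO M) \<cdot> (idm M (dO a) \<otimes> u) \<cdot> (ha \<otimes> idm M (unitO M))"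
    by (rule comp_assoc[symmetric]) (rule hom_rules homs)+
  also have "(idm M (dO a) \<otimes> u) \<cdot> (ha \<otimes> idm M (unitO M))
      = (idm M (dO a) \<cdot> ha) \<otimes> (u \<cdot> idm M (unitO M))"
    by (rule tensm_comp[symmetric]) (rule hom_rules homs)+
  finally show ?thesis
    using homs u_hom by simp
qed

abbreviation Herm :: "('o \<times> 'm, 'm) moncat" where "Herm \<equiv> Herm_moncat M dO dM eta chi u"

lemma Herm_simps [simp]:
  "Ob Herm = {(c, h). c \<in> Ob M \<and> herm c h}"
  "Hom Herm x y = Hom M (fst x) (fst y)"
  "cmp Herm = cmp M" "idm Herm x = idm M (fst x)"
  "tens Herm x y = (fst x \<otimes>\<^sub>o fst y, chi (fst x) (fst y) \<cdot> (snd x \<otimes> snd y))"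
  "tensm Herm = tensm M" "unitO Herm = (unitO M, u)"
  "assoc Herm x y z = assoc M (fst x) (fst y) (fst z)"
  "lunit Herm x = lunit M (fst x)" "runit Herm x = runit M (fst x)"
  by (simp_all add: Herm_moncat_def)

lemma is_iso_Herm: "is_iso Herm x y f \<longleftrightarrow> is_iso M (fst x) (fst y) f"
  unfolding is_iso_def by simp

lemma is_category_Herm: "is_category Herm"
  using is_category unfolding is_category_def by simp blast

lemma is_monoidal_category_Herm: "is_monoidal_category Herm"
  unfolding is_monoidal_category_def is_iso_Herm
  by (auto simp: is_category_Herm herm_pairing_unit herm_pairing_tens assoc_iso lunit_iso runit_iso
      tensm_comp assoc_nat lunit_nat runit_nat pentagon triangle)

end

theorem mainTheorem6:
  fixes M :: "('o,'m) moncat"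
    and dO :: "'o \<Rightarrow> 'o" and dM :: "'m \<Rightarrow> 'm" and eta :: "'o \<Rightarrow> 'm"
    and chi :: "'o \<Rightarrow> 'o \<Rightarrow> 'm" and u :: 'm
  assumes "monoidal_anti_involutive M dO dM eta chi u"
  shows "monoidal_dagger_category (Herm_moncat M dO dM eta chi u) (Herm_dag M dO dM)"
proof -
  interpret anti_involutive M dO dM eta chi u
    using assms by (rule anti_involutive.intro)
  show ?thesis
    unfolding monoidal_dagger_category_def Let_def
    by (auto simp: is_monoidal_category_Herm Herm_dag_hom Herm_dag_id Herm_dag_comp
        Herm_dag_involutive Herm_dag_tensm herm_pairing_unit herm_pairing_tens
        Herm_dag_unitary assoc_iso lunit_iso runit_iso
        assoc_preserves_pairing lunit_preserves_pairing runit_preserves_pairing)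
qed

end
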